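(* Fix a distribution-labeled $k$-graph $G=(\mathcal V,\mathcal E,N,(\mu_{\mathsf e}))$, an integer $K>0$ and $\alpha\in(0,1]$. For any constant $p>\frac1{k-1}$ there is a constant $\delta\in(0,1)$ such that, if for each $(\mathsf e,j)\in\mathcal E\times[K]$ a matching $M^{(\mathsf e,j)}$ is sampled independently and uniformly from $\mathcal M_{\mathcal U_{\mathsf e},\alpha n}$, then with probability $1-o(1)$ as $n\to\infty$: $$\sum_{(\mathsf e,j)\in\mathcal E\times[K]}|M^{(\mathsf e,j)}[V]|\le p|V|\quad\text{for all }V\subseteq\mathcal V\times[n]\text{ with }|V|\le\delta n.$$
   Context: $k\ge2$. A distribution-labeled $k$-graph $G=(\mathcal V,\mathcal E,N,(\mu_{\mathsf e}))$ consists of a finite set $\mathcal V$, a finite multiset $\mathcal E$ of ordered $k$-tuples of distinct elements of $\mathcal V$, an integer $N\ge2$ and distributions $\mu_{\mathsf e}$ (irrelevant here). For $\mathsf e=(\mathsf v_1,\dots,\mathsf v_k)$, $\mathcal U_{\mathsf e}=(\{\mathsf v_1\}\times[n],\dots,\{\mathsf v_k\}\times[n])$, and $\mathcal M_{\mathcal U_{\mathsf e},m}$ is the set of $m$-element sets of pairwise vertex-disjoint tuples in $(\{\mathsf v_1\}\times[n])\times\dots\times(\{\mathsf v_k\}\times[n])$; $n$ ranges over integers with $\alpha n$ an integer. For a matching $M$ and $V\subseteq\mathcal V\times[n]$, $M[V]$ is the set of edges $(v_1,\dots,v_k)\in M$ with all $v_i\in V$. *)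

theory Defs
  imports "HOL-Probability.Probability"
begin

text \<open>A (hyper)edge e = (v_1,...,v_k) of the k-graph is a list of distinct vertices.
  The blow-up vertex set is V x [n], with [n] = {1..n}.
  Tuples in ({v_1} x [n]) x ... x ({v_k} x [n]) are lists of length k.\<close>

definition blowup_tuples :: "'v list \<Rightarrow> nat \<Rightarrow> ('v \<times> nat) list set" where
  "blowup_tuples e n =
     {t. length t = length e \<and> (\<forall>i<length e. fst (t ! i) = e ! i \<and> snd (t ! i) \<in> {1..n})}"

definition matchings :: "'v list \<Rightarrow> nat \<Rightarrow> nat \<Rightarrow> ('v \<times> nat) list set set" where
  "matchings e n m =
     {M. M \<subseteq> blowup_tuples e n \<and> card M = m \<and>
         (\<forall>t\<in>M. \<forall>s\<in>M. t \<noteq> s \<longrightarrow> set t \<inter> set s = {})}"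

definition induced_edges :: "('v \<times> nat) list set \<Rightarrow> ('v \<times> nat) set \<Rightarrow> ('v \<times> nat) list set" where
  "induced_edges M V = {t \<in> M. set t \<subseteq> V}"

text \<open>Independent uniform sampling of M^{(e,j)} for (e,j) in E x [K]; the multiset E
  is given as a list es, indexed by i < length es; [K] is indexed by j < K.\<close>
definition sample_matchings ::
  "'v list list \<Rightarrow> nat \<Rightarrow> nat \<Rightarrow> nat \<Rightarrow> (nat \<times> nat \<Rightarrow> ('v \<times> nat) list set) pmf" where
  "sample_matchings es K n m =
     Pi_pmf ({..<length es} \<times> {..<K}) {} (\<lambda>(i, j). pmf_of_set (matchings (es ! i) n m))"

end

theory Submission
  imports Defs "HOL-Combinatorics.Transposition" "HOL-Real_Asymp.Real_Asymp"
begin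

(* First moment method. If a set V of s <= delta n blown-up vertices spans more than p s edges
   of the sampled matchings, then some family S of r = floor (p s) + 1 of these edges, each a
   k-tuple inside V, lies in the sample.

   A fixed set F of pairwise disjoint tuples lies in a uniform matching with probability at most
   (2/n)^((k-1)|F|) as long as |F| <= n/2: transposing the labels of two tuples t, t' in every
   coordinate maps the matchings through F + t injectively to those through F + t', and double
   counting over the at least (n - |F|)^k tuples t' disjoint from F gives the bound.

   By independence and a union bound over V and S the failure probability is at most
     sum_s C(|V| n, s) C(|E| K s^k, r) (2/n)^((k-1) r) <= sum_s A (D (s/n)^gamma)^s,
   where gamma = (k-1) p - 1 > 0. Once D delta^gamma <= 1/2, the terms with s <= sqrt n decay
   geometrically from O(n^(-gamma/2)) and the remaining ones are at most 2^(-sqrt n). *)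

section \<open>Matchings through a fixed partial matching\<close>

definition coord_transpose ::
  "('v \<times> nat) list \<Rightarrow> ('v \<times> nat) list \<Rightarrow> ('v \<times> nat) list \<Rightarrow> ('v \<times> nat) list" where
  "coord_transpose t t' s =
     map (\<lambda>i. (fst (s ! i), Transposition.transpose (snd (t ! i)) (snd (t' ! i)) (snd (s ! i))))
       [0..<length s]"

lemma length_coord_transpose [simp]: "length (coord_transpose t t' s) = length s"
  by (simp add: coord_transpose_def)

lemma nth_coord_transpose:
  "i < length s \<Longrightarrow>
     coord_transpose t t' s ! i =
       (fst (s ! i), Transposition.transpose (snd (t ! i)) (snd (t' ! i)) (snd (s ! i)))"
  by (simp add: coord_transpose_def)

lemma blowup_tuples_disjoint_iff:
  assumes "distinct e" "s \<in> blowup_tuples e n" "s' \<in> blowup_tuples e n"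
  shows "set s \<inter> set s' = {} \<longleftrightarrow> (\<forall>i<length e. snd (s ! i) \<noteq> snd (s' ! i))"
proof
  assume disj: "set s \<inter> set s' = {}"
  show "\<forall>i<length e. snd (s ! i) \<noteq> snd (s' ! i)"
  proof (intro allI impI notI)
    fix i assume i: "i < length e" and eq: "snd (s ! i) = snd (s' ! i)"
    then have "s ! i = s' ! i" using assms by (simp add: blowup_tuples_def prod_eq_iff)
    moreover have "s ! i \<in> set s" "s' ! i \<in> set s'" using assms i by (auto simp: blowup_tuples_def)
    ultimately show False using disj by auto
  qed
next
  assume coords: "\<forall>i<length e. snd (s ! i) \<noteq> snd (s' ! i)"
  show "set s \<inter> set s' = {}"
  proof (rule ccontr)
    assume "set s \<inter> set s' \<noteq> {}"
    then obtain i j where ij: "i < length s" "j < length s'" "s ! i = s' ! j"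
      by (metis disjoint_iff in_set_conv_nth)
    have len: "length s = length e" "length s' = length e"
      using assms by (auto simp: blowup_tuples_def)
    then have "e ! i = e ! j" using assms ij by (auto simp: blowup_tuples_def)
    then have "i = j" using assms(1) ij len by (simp add: nth_eq_iff_index_eq)
    then show False using coords ij len by auto
  qed
qed

lemma coord_transpose_in_blowup_tuples:
  "t \<in> blowup_tuples e n \<Longrightarrow> t' \<in> blowup_tuples e n \<Longrightarrow> s \<in> blowup_tuples e n \<Longrightarrow>
     coord_transpose t t' s \<in> blowup_tuples e n"
  by (auto simp: blowup_tuples_def nth_coord_transpose Transposition.transpose_def)

lemma coord_transpose_involutory:
  "t \<in> blowup_tuples e n \<Longrightarrow> t' \<in> blowup_tuples e n \<Longrightarrow> s \<in> blowup_tuples e n \<Longrightarrow>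
     coord_transpose t t' (coord_transpose t t' s) = s"
  by (intro nth_equalityI) (auto simp: blowup_tuples_def nth_coord_transpose prod_eq_iff)

lemma coord_transpose_first:
  "t \<in> blowup_tuples e n \<Longrightarrow> t' \<in> blowup_tuples e n \<Longrightarrow> coord_transpose t t' t = t'"
  by (intro nth_equalityI) (auto simp: blowup_tuples_def nth_coord_transpose prod_eq_iff)

lemma coord_transpose_fixed:
  assumes "distinct e" "s \<in> blowup_tuples e n" "t \<in> blowup_tuples e n" "t' \<in> blowup_tuples e n"
    and "set s \<inter> set t = {}" "set s \<inter> set t' = {}"
  shows "coord_transpose t t' s = s"
  using assms blowup_tuples_disjoint_iff[OF assms(1,2,3)] blowup_tuples_disjoint_iff[OF assms(1,2,4)]
  by (intro nth_equalityI) (auto simp: blowup_tuples_def nth_coord_transpose prod_eq_iff)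

lemma inj_on_coord_transpose:
  "t \<in> blowup_tuples e n \<Longrightarrow> t' \<in> blowup_tuples e n \<Longrightarrow>
     inj_on (coord_transpose t t') (blowup_tuples e n)"
  by (metis coord_transpose_involutory inj_onI)

lemma coord_transpose_disjoint:
  assumes "distinct e" "t \<in> blowup_tuples e n" "t' \<in> blowup_tuples e n"
    and "s \<in> blowup_tuples e n" "s' \<in> blowup_tuples e n" "set s \<inter> set s' = {}"
  shows "set (coord_transpose t t' s) \<inter> set (coord_transpose t t' s') = {}"
proof -
  have len: "length s = length e" "length s' = length e"
    using assms by (auto simp: blowup_tuples_def)
  have "\<forall>i<length e. snd (s ! i) \<noteq> snd (s' ! i)"
    using blowup_tuples_disjoint_iff[OF assms(1,4,5)] assms(6) by simp
  then have "\<forall>i<length e. snd (coord_transpose t t' s ! i) \<noteq> snd (coord_transpose t t' s' ! i)"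
    using len by (auto simp: nth_coord_transpose dest: transpose_eq_imp_eq)
  then show ?thesis
    using blowup_tuples_disjoint_iff[OF assms(1) coord_transpose_in_blowup_tuples[OF assms(2,3,4)]
        coord_transpose_in_blowup_tuples[OF assms(2,3,5)]]
    by simp
qed

lemma finite_blowup_tuples [simp]: "finite (blowup_tuples e n)"
proof -
  have "blowup_tuples e n \<subseteq> {xs. set xs \<subseteq> set e \<times> {1..n} \<and> length xs = length e}"
  proof (rule subsetI, rule CollectI, rule conjI)
    fix t assume t: "t \<in> blowup_tuples e n"
    show "set t \<subseteq> set e \<times> {1..n}"
    proof
      fix x assume "x \<in> set t"
      then obtain i where "i < length t" "x = t ! i" by (auto simp: in_set_conv_nth)
      with t show "x \<in> set e \<times> {1..n}" by (auto simp: blowup_tuples_def mem_Times_iff)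
    qed
    show "length t = length e" using t by (simp add: blowup_tuples_def)
  qed
  then show ?thesis by (rule finite_subset) (simp add: finite_lists_length_eq)
qed

lemma finite_matchings [simp]: "finite (matchings e n m)"
  by (rule finite_subset[of _ "Pow (blowup_tuples e n)"]) (auto simp: matchings_def)

lemma matchingsD:
  assumes "M \<in> matchings e n m"
  shows "M \<subseteq> blowup_tuples e n" "card M = m" "finite M"
    and "\<And>t s. t \<in> M \<Longrightarrow> s \<in> M \<Longrightarrow> t \<noteq> s \<Longrightarrow> set t \<inter> set s = {}"
  using assms by (auto simp: matchings_def intro: finite_subset)

lemma matchings_nonempty:
  assumes "e \<noteq> []" "m \<le> n"
  shows "matchings e n m \<noteq> {}"
proof -
  define diag where "diag a = map (\<lambda>i. (e ! i, a)) [0..<length e]" for a :: nat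
  have inj: "inj_on diag {1..m}"
  proof (rule inj_onI)
    fix a b assume "diag a = diag b"
    then have "snd (diag a ! 0) = snd (diag b ! 0)" by simp
    then show "a = b" using assms(1) by (simp add: diag_def)
  qed
  have "diag ` {1..m} \<in> matchings e n m"
    unfolding matchings_def
  proof (intro CollectI conjI ballI impI)
    show "diag ` {1..m} \<subseteq> blowup_tuples e n"
      using assms(2) by (auto simp: diag_def blowup_tuples_def)
    show "card (diag ` {1..m}) = m" using card_image[OF inj] by simp
    fix t s assume "t \<in> diag ` {1..m}" "s \<in> diag ` {1..m}" "t \<noteq> s"
    then show "set t \<inter> set s = {}" by (auto simp: diag_def)
  qed
  then show ?thesis by blast
qed

lemma card_matchings_containing_insert_le:
  assumes "distinct e" "F \<subseteq> blowup_tuples e n" "t \<in> blowup_tuples e n" "t' \<in> blowup_tuples e n"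
    and "\<forall>s\<in>F. set s \<inter> set t = {}" "\<forall>s\<in>F. set s \<inter> set t' = {}"
  shows "card {M \<in> matchings e n m. insert t F \<subseteq> M} \<le> card {M \<in> matchings e n m. insert t' F \<subseteq> M}"
proof (rule card_inj_on_le)
  let ?f = "coord_transpose t t'"
  show "inj_on (image ?f) {M \<in> matchings e n m. insert t F \<subseteq> M}"
  proof (rule inj_onI)
    fix M1 M2 assume "M1 \<in> {M \<in> matchings e n m. insert t F \<subseteq> M}"
      "M2 \<in> {M \<in> matchings e n m. insert t F \<subseteq> M}" "?f ` M1 = ?f ` M2"
    then show "M1 = M2"
      using inj_on_image_eq_iff[OF inj_on_coord_transpose[OF assms(3,4)] matchingsD(1) matchingsD(1)]
      by blast
  qed
  show "image ?f ` {M \<in> matchings e n m. insert t F \<subseteq> M}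
      \<subseteq> {M \<in> matchings e n m. insert t' F \<subseteq> M}"
  proof safe
    fix M assume M: "M \<in> matchings e n m" "insert t F \<subseteq> M"
    note MD = matchingsD[OF M(1)]
    have inj: "inj_on ?f M"
      using inj_on_coord_transpose[OF assms(3,4)] MD(1) by (rule inj_on_subset)
    show "?f ` M \<in> matchings e n m"
      unfolding matchings_def
    proof (intro CollectI conjI ballI impI)
      show "?f ` M \<subseteq> blowup_tuples e n"
        using MD(1) coord_transpose_in_blowup_tuples[OF assms(3,4)] by blast
      show "card (?f ` M) = m" using card_image[OF inj] MD(2) by simp
      fix u w assume "u \<in> ?f ` M" "w \<in> ?f ` M" "u \<noteq> w"
      then obtain x y where "x \<in> M" "y \<in> M" "u = ?f x" "w = ?f y" "x \<noteq> y" by blast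
      then show "set u \<inter> set w = {}"
        using coord_transpose_disjoint[OF assms(1,3,4)] MD(1,4) by blast
    qed
    show "t' \<in> ?f ` M"
      using M(2) coord_transpose_first[OF assms(3,4)] by (metis image_eqI insert_subset)
    fix s assume s: "s \<in> F"
    then have "?f s = s"
      using assms coord_transpose_fixed[OF assms(1) _ assms(3,4)] by blast
    then show "s \<in> ?f ` M" using M(2) s by (metis image_eqI insert_subset subsetD)
  qed
qed simp

definition free_tuples :: "'v list \<Rightarrow> nat \<Rightarrow> ('v \<times> nat) list set \<Rightarrow> ('v \<times> nat) list set" where
  "free_tuples e n F = {t \<in> blowup_tuples e n. \<forall>s\<in>F. set s \<inter> set t = {}}"

lemma finite_free_tuples [simp]: "finite (free_tuples e n F)"
  by (simp add: free_tuples_def)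

lemma card_free_tuples_ge:
  assumes "distinct e" "F \<subseteq> blowup_tuples e n" "finite F"
  shows "(n - card F) ^ length e \<le> card (free_tuples e n F)"
proof -
  define avail where "avail i = {1..n} - (\<lambda>s. snd (s ! i)) ` F" for i
  define tuple where "tuple h = map (\<lambda>i. (e ! i, h i)) [0..<length e]" for h :: "nat \<Rightarrow> nat"
  have "n - card F \<le> card (avail i)" for i
  proof -
    have "card {1..n} - card ((\<lambda>s. snd (s ! i)) ` F) \<le> card (avail i)"
      unfolding avail_def using assms(3) by (intro diff_card_le_card_Diff) auto
    moreover have "card ((\<lambda>s. snd (s ! i)) ` F) \<le> card F" using assms(3) by (rule card_image_le)
    ultimately show ?thesis by simp
  qed
  then have "(n - card F) ^ length e \<le> (\<Prod>i<length e. card (avail i))"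
    using prod_mono[of "{..<length e}" "\<lambda>_. n - card F" "\<lambda>i. card (avail i)"] by simp
  also have "\<dots> = card (PiE {..<length e} avail)" by (simp add: card_PiE)
  also have "\<dots> = card (tuple ` PiE {..<length e} avail)"
  proof (rule card_image[symmetric], rule inj_onI)
    fix h1 h2 assume h: "h1 \<in> PiE {..<length e} avail" "h2 \<in> PiE {..<length e} avail" "tuple h1 = tuple h2"
    then have "h1 i = h2 i" if "i < length e" for i
      using that arg_cong[OF h(3), of "\<lambda>xs. snd (xs ! i)"] by (simp add: tuple_def)
    then show "h1 = h2" using h(1,2) by (intro PiE_ext) auto
  qed
  also have "\<dots> \<le> card (free_tuples e n F)"
  proof (intro card_mono finite_free_tuples subsetI)
    fix u assume "u \<in> tuple ` PiE {..<length e} avail"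
    then obtain h where h: "h \<in> PiE {..<length e} avail" and u: "u = tuple h" by blast
    have u_blowup: "u \<in> blowup_tuples e n"
      using h by (auto simp: u tuple_def blowup_tuples_def avail_def PiE_def Pi_def)
    have "set s \<inter> set u = {}" if s: "s \<in> F" for s
    proof -
      have "snd (s ! i) \<noteq> snd (u ! i)" if "i < length e" for i
      proof -
        have "h i \<in> avail i" using h that by auto
        moreover have "snd (u ! i) = h i" using that by (simp add: u tuple_def)
        ultimately show ?thesis using s unfolding avail_def by (metis DiffD2 image_eqI)
      qed
      then show ?thesis using blowup_tuples_disjoint_iff[OF assms(1) _ u_blowup] s assms(2) by blast
    qed
    then show "u \<in> free_tuples e n F" using u_blowup by (simp add: free_tuples_def)
  qed
  finally show ?thesis .
qed

lemma card_free_tuples_mult_le: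
  assumes "distinct e" "e \<noteq> []" "F \<subseteq> blowup_tuples e n" "finite F" "t \<in> free_tuples e n F"
  shows "card (free_tuples e n F) * card {M \<in> matchings e n m. insert t F \<subseteq> M}
           \<le> (m - card F) * card {M \<in> matchings e n m. F \<subseteq> M}"
proof -
  let ?T = "free_tuples e n F"
  let ?A = "{M \<in> matchings e n m. F \<subseteq> M}"
  have "card ?T * card {M \<in> matchings e n m. insert t F \<subseteq> M}
      \<le> (\<Sum>t'\<in>?T. card {M \<in> ?A. t' \<in> M})"
  proof -
    have "card {M \<in> matchings e n m. insert t F \<subseteq> M} \<le> card {M \<in> ?A. t' \<in> M}" if "t' \<in> ?T" for t'
    proof -
      have "{M \<in> matchings e n m. insert t' F \<subseteq> M} = {M \<in> ?A. t' \<in> M}" by auto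
      then show ?thesis
        using card_matchings_containing_insert_le[OF assms(1,3), of t t' m] assms(5) that
        by (simp add: free_tuples_def)
    qed
    then have "(\<Sum>t'\<in>?T. card {M \<in> matchings e n m. insert t F \<subseteq> M})
        \<le> (\<Sum>t'\<in>?T. card {M \<in> ?A. t' \<in> M})"
      by (rule sum_mono)
    then show ?thesis by simp
  qed
  also have "\<dots> = (\<Sum>M\<in>?A. card {t'\<in>?T. t' \<in> M})"
    by (rule sum_multicount_gen) auto
  also have "\<dots> \<le> (\<Sum>M\<in>?A. m - card F)"
  proof (rule sum_mono)
    fix M assume M: "M \<in> ?A"
    note MD = matchingsD[of M e n m]
    have "{t'\<in>?T. t' \<in> M} \<subseteq> M - F"
    proof safe
      fix s assume "s \<in> ?T" "s \<in> M" "s \<in> F"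
      then have "set s = {}" by (auto simp: free_tuples_def)
      moreover have "length s = length e" using \<open>s \<in> ?T\<close> by (auto simp: free_tuples_def blowup_tuples_def)
      ultimately show False using assms(2) by simp
    qed
    then have "card {t'\<in>?T. t' \<in> M} \<le> card (M - F)" using M MD by (intro card_mono) auto
    also have "card (M - F) = m - card F" using M MD assms(4) by (simp add: card_Diff_subset)
    finally show "card {t'\<in>?T. t' \<in> M} \<le> m - card F" .
  qed
  also have "\<dots> = (m - card F) * card ?A" by simp
  finally show ?thesis .
qed

lemma card_matchings_containing_insert_mult_le:
  assumes "distinct e" "e \<noteq> []" "m \<le> n" "finite F" "t \<notin> F"
  shows "card {M \<in> matchings e n m. insert t F \<subseteq> M} * (n - card F) ^ length e
           \<le> (n - card F) * card {M \<in> matchings e n m. F \<subseteq> M}"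
proof (cases "{M \<in> matchings e n m. insert t F \<subseteq> M} = {}")
  case False
  let ?X = "card {M \<in> matchings e n m. insert t F \<subseteq> M}"
  let ?Y = "card {M \<in> matchings e n m. F \<subseteq> M}"
  from False obtain M where M: "M \<in> matchings e n m" "insert t F \<subseteq> M" by blast
  note MD = matchingsD[OF M(1)]
  have F: "F \<subseteq> blowup_tuples e n" using M MD(1) by blast
  have "set s \<inter> set t = {}" if "s \<in> F" for s
    using MD(4)[of s t] M(2) that assms(5) by blast
  then have t: "t \<in> free_tuples e n F" using M MD(1) by (auto simp: free_tuples_def)
  have "?X * (n - card F) ^ length e \<le> ?X * card (free_tuples e n F)"
    using card_free_tuples_ge[OF assms(1) F assms(4)] by (rule mult_le_mono2)
  also have "\<dots> \<le> (m - card F) * ?Y"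
    using card_free_tuples_mult_le[OF assms(1,2) F assms(4) t] by (simp add: mult.commute)
  also have "\<dots> \<le> (n - card F) * ?Y"
    using assms(3) by (intro mult_le_mono1 diff_le_mono)
  finally show ?thesis .
next
  case True
  then show ?thesis by (metis card.empty mult_0 zero_le)
qed

lemma card_matchings_containing_le:
  assumes "distinct e" "e \<noteq> []" "m \<le> n" "finite F"
  shows "card {M \<in> matchings e n m. F \<subseteq> M} * (n - card F) ^ ((length e - 1) * card F)
           \<le> card (matchings e n m)"
  using assms(4)
proof (induction F rule: finite_induct)
  case (insert t F)
  define k where "k = length e - 1"
  define X where "X = card {M \<in> matchings e n m. insert t F \<subseteq> M}"
  define Y where "Y = card {M \<in> matchings e n m. F \<subseteq> M}"
  have len: "length e = Suc k" using assms(2) by (simp add: k_def)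
  have "X * (n - card F) ^ k \<le> Y"
  proof (cases "k = 0")
    case True
    have "X \<le> Y" unfolding X_def Y_def by (intro card_mono) auto
    then show ?thesis using True by simp
  next
    case k: False
    show ?thesis
    proof (cases "n - card F = 0")
      case False
      have "(n - card F) * (X * (n - card F) ^ k) \<le> (n - card F) * Y"
        using card_matchings_containing_insert_mult_le[OF assms(1-3) insert(1,2)]
        by (simp add: X_def Y_def len mult_ac)
      then show ?thesis using False by simp
    qed (use k in \<open>simp add: zero_power\<close>)
  qed
  note XY = this
  have "(n - card (insert t F)) ^ (k * card (insert t F)) \<le> (n - card F) ^ (k * Suc (card F))"
    using insert(1,2) by (simp add: power_mono)
  then have "X * (n - card (insert t F)) ^ (k * card (insert t F))
      \<le> X * (n - card F) ^ k * (n - card F) ^ (k * card F)"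
    by (simp add: power_add mult.assoc)
  also have "\<dots> \<le> Y * (n - card F) ^ (k * card F)"
    using XY by (rule mult_le_mono1)
  also have "\<dots> \<le> card (matchings e n m)" using insert(3) by (simp add: Y_def k_def)
  finally show ?case by (simp add: X_def k_def)
qed simp

lemma prob_matching_contains_le:
  assumes "distinct e" "e \<noteq> []" "m \<le> n" "finite F" "2 * card F \<le> n"
  shows "measure_pmf.prob (pmf_of_set (matchings e n m)) {M. F \<subseteq> M}
           \<le> (2 / real n) ^ ((length e - 1) * card F)"
proof -
  let ?M = "matchings e n m"
  let ?Y = "card {M \<in> ?M. F \<subseteq> M}"
  let ?d = "(length e - 1) * card F"
  have nonempty: "?M \<noteq> {}" by (rule matchings_nonempty[OF assms(2,3)])
  show ?thesis
  proof (cases "n = 0")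
    case False
    have "real ?Y * (real n / 2) ^ ?d \<le> real ?Y * real (n - card F) ^ ?d"
      using assms(5) by (intro mult_left_mono power_mono) auto
    also have "\<dots> = real (?Y * (n - card F) ^ ?d)" by simp
    also have "\<dots> \<le> real (card ?M)"
      using card_matchings_containing_le[OF assms(1-4)] by (simp only: of_nat_le_iff)
    finally have "real ?Y \<le> real (card ?M) / (real n / 2) ^ ?d"
      using False by (simp add: pos_le_divide_eq)
    also have "\<dots> = (2 / real n) ^ ?d * real (card ?M)"
      by (simp add: power_divide)
    finally have "real ?Y / real (card ?M) \<le> (2 / real n) ^ ?d"
      using nonempty by (intro mult_imp_div_pos_le) (auto simp: card_gt_0_iff)
    moreover have "measure_pmf.prob (pmf_of_set ?M) {M. F \<subseteq> M} = real ?Y / real (card ?M)"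
      using nonempty by (simp add: measure_pmf_of_set Int_def conj_commute)
    ultimately show ?thesis by simp
  qed (use assms(4,5) in simp)
qed

section \<open>Independent matchings and the union bound\<close>

(* Only meaningful for 0 <= x: e.g. least_nat_above (-2) = 1. *)
definition least_nat_above :: "real \<Rightarrow> nat" where
  "least_nat_above x = nat \<lfloor>x\<rfloor> + 1"

lemma less_least_nat_above: "x < real (least_nat_above x)"
  unfolding least_nat_above_def by linarith

lemma least_nat_above_le: "0 \<le> x \<Longrightarrow> real (least_nat_above x) \<le> x + 1"
  unfolding least_nat_above_def by linarith

lemma least_nat_above_le_iff: "0 \<le> x \<Longrightarrow> least_nat_above x \<le> c \<longleftrightarrow> x < real c"
  unfolding least_nat_above_def by linarith

lemma set_pmf_sample_matchings:
  assumes "\<forall>e\<in>set es. e \<noteq> []" "m \<le> n" "Ms \<in> set_pmf (sample_matchings es K n m)"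
  shows "Ms \<in> PiE_dflt ({..<length es} \<times> {..<K}) {} (\<lambda>(i, j). matchings (es ! i) n m)"
proof -
  have "matchings (es ! i) n m \<noteq> {}" if "i < length es" for i
    using assms(1,2) that by (simp add: matchings_nonempty)
  then show ?thesis
    using assms(3) by (auto simp: sample_matchings_def set_Pi_pmf PiE_dflt_def)
qed

lemma prob_sample_contains_family_le:
  assumes es: "\<forall>e\<in>set es. length e = k \<and> distinct e" and "k \<ge> 1" "m \<le> n"
    and F: "\<And>ij. finite (F ij)" "\<And>ij. 2 * card (F ij) \<le> n"
  shows "measure_pmf.prob (sample_matchings es K n m) {Ms. \<forall>ij\<in>{..<length es} \<times> {..<K}. F ij \<subseteq> Ms ij}
           \<le> (2 / real n) ^ ((k - 1) * (\<Sum>ij\<in>{..<length es} \<times> {..<K}. card (F ij)))"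
proof -
  define I where "I = {..<length es} \<times> {..<K}"
  define P :: "nat \<times> nat \<Rightarrow> _" where "P = (\<lambda>(i, j). pmf_of_set (matchings (es ! i) n m))"
  let ?p = "sample_matchings es K n m"
  have nonempty: "\<forall>e\<in>set es. e \<noteq> []" using es assms(2) by auto
  have "Ms \<in> PiE_dflt I {} (\<lambda>ij. {M. F ij \<subseteq> M})"
    if Ms: "Ms \<in> set_pmf ?p" "\<forall>ij\<in>I. F ij \<subseteq> Ms ij" for Ms
    using set_pmf_sample_matchings[OF nonempty assms(3) Ms(1)] Ms(2) unfolding I_def PiE_dflt_def by blast
  then have "measure_pmf.prob ?p {Ms. \<forall>ij\<in>I. F ij \<subseteq> Ms ij}
      \<le> measure_pmf.prob ?p (PiE_dflt I {} (\<lambda>ij. {M. F ij \<subseteq> M}))"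
    by (subst measure_Int_set_pmf[symmetric]) (rule measure_pmf.finite_measure_mono, auto)
  also have "\<dots> = (\<Prod>ij\<in>I. measure_pmf.prob (P ij) {M. F ij \<subseteq> M})"
    unfolding sample_matchings_def I_def P_def by (rule measure_Pi_pmf_PiE_dflt) simp
  also have "\<dots> \<le> (\<Prod>ij\<in>I. (2 / real n) ^ ((k - 1) * card (F ij)))"
  proof (rule prod_mono, safe)
    fix i j assume "(i, j) \<in> I"
    then have "es ! i \<in> set es" by (simp add: I_def)
    then show "measure_pmf.prob (P (i, j)) {M. F (i, j) \<subseteq> M} \<le> (2 / real n) ^ ((k - 1) * card (F (i, j)))"
      using prob_matching_contains_le[OF _ _ assms(3) F] es assms(2) by (fastforce simp: P_def)
  qed simp
  also have "\<dots> = (2 / real n) ^ ((k - 1) * (\<Sum>ij\<in>I. card (F ij)))"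
    by (simp add: power_sum[symmetric] power_mult[symmetric] sum_distrib_left)
  finally show ?thesis by (simp add: I_def)
qed

lemma prob_sample_contains_le:
  assumes es: "\<forall>e\<in>set es. length e = k \<and> distinct e" and "k \<ge> 1" "m \<le> n"
    and S: "S \<subseteq> ({..<length es} \<times> {..<K}) \<times> UNIV" "finite S" "2 * card S \<le> n"
  shows "measure_pmf.prob (sample_matchings es K n m) {Ms. \<forall>(ij, t)\<in>S. t \<in> Ms ij}
           \<le> (2 / real n) ^ ((k - 1) * card S)"
proof -
  define I where "I = {..<length es} \<times> {..<K}"
  define F where "F ij = {t. (ij, t) \<in> S}" for ij
  have finite_F: "finite (F ij)" for ij
    using finite_imageI[OF S(2), of snd] by (rule finite_subset[rotated]) (force simp: F_def)
  have "card (F ij) \<le> card S" for ij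
  proof -
    have "F ij = snd ` (S \<inter> {ij} \<times> UNIV)" by (force simp: F_def)
    also have "card \<dots> \<le> card S" using S(2) by (meson card_image_le card_mono finite_Int inf_le1 le_trans)
    finally show ?thesis .
  qed
  then have small: "2 * card (F ij) \<le> n" for ij using S(3) by (meson le_trans mult_le_mono2)
  have S_Sigma: "S = Sigma I F" using S(1) by (auto simp: I_def F_def)
  have "card S = (\<Sum>ij\<in>I. card (F ij))"
    unfolding S_Sigma using finite_F by (intro card_SigmaI) (auto simp: I_def)
  moreover have "{Ms. \<forall>(ij, t)\<in>S. t \<in> Ms ij} = {Ms. \<forall>ij\<in>I. F ij \<subseteq> Ms ij}"
    unfolding S_Sigma by blast
  ultimately show ?thesis
    using prob_sample_contains_family_le[OF es assms(2,3) finite_F small] by (simp add: I_def)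
qed

definition tuple_families :: "'i set \<Rightarrow> 'a set \<Rightarrow> nat \<Rightarrow> nat \<Rightarrow> ('i \<times> 'a list) set set" where
  "tuple_families I V k r = {S. S \<subseteq> I \<times> {t. set t \<subseteq> V \<and> length t = k} \<and> card S = r}"

lemma finite_tuple_family:
  "finite I \<Longrightarrow> finite V \<Longrightarrow> S \<in> tuple_families I V k r \<Longrightarrow> finite S"
  unfolding tuple_families_def by (auto intro: finite_subset simp: finite_lists_length_eq)

lemma finite_tuple_families [simp]:
  "finite I \<Longrightarrow> finite V \<Longrightarrow> finite (tuple_families I V k r)"
  unfolding tuple_families_def
  by (rule finite_subset[of _ "Pow (I \<times> {t. set t \<subseteq> V \<and> length t = k})"])
    (auto simp: finite_lists_length_eq)

lemma card_tuple_families: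
  "finite I \<Longrightarrow> finite V \<Longrightarrow> card (tuple_families I V k r) = (card I * card V ^ k) choose r"
  using n_subsets[of "I \<times> {t. set t \<subseteq> V \<and> length t = k}" r]
  by (simp add: tuple_families_def card_cartesian_product card_lists_length_eq finite_lists_length_eq)

lemma
  assumes "finite I" "finite A"
  shows finite_Sigma_tuple_families:
      "finite (SIGMA V:{V. V \<subseteq> A \<and> card V = s}. tuple_families I V k r)"
    and card_Sigma_tuple_families:
      "card (SIGMA V:{V. V \<subseteq> A \<and> card V = s}. tuple_families I V k r)
         = (card A choose s) * ((card I * s ^ k) choose r)"
proof -
  have sets: "finite {V. V \<subseteq> A \<and> card V = s}"
    using assms(2) by (rule finite_subset[rotated, OF finite_Pow_iff[THEN iffD2]]) blast
  have subsets_finite: "V \<subseteq> A \<Longrightarrow> finite V" for V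
    by (rule rev_finite_subset[OF assms(2)])
  have families: "\<forall>V\<in>{V. V \<subseteq> A \<and> card V = s}. finite (tuple_families I V k r)"
    using assms(1) subsets_finite by simp
  show "finite (SIGMA V:{V. V \<subseteq> A \<and> card V = s}. tuple_families I V k r)"
    using families by (intro finite_SigmaI[OF sets]) blast
  have "card (SIGMA V:{V. V \<subseteq> A \<and> card V = s}. tuple_families I V k r)
      = (\<Sum>V\<in>{V. V \<subseteq> A \<and> card V = s}. card (tuple_families I V k r))"
    by (rule card_SigmaI[OF sets families])
  also have "\<dots> = (\<Sum>V\<in>{V. V \<subseteq> A \<and> card V = s}. (card I * s ^ k) choose r)"
    using assms(1) subsets_finite by (intro sum.cong) (simp_all add: card_tuple_families)
  also have "\<dots> = (card A choose s) * ((card I * s ^ k) choose r)"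
    using n_subsets[OF assms(2), of s] by simp
  finally show "card (SIGMA V:{V. V \<subseteq> A \<and> card V = s}. tuple_families I V k r)
      = (card A choose s) * ((card I * s ^ k) choose r)" .
qed

lemma overfull_set_witness:
  assumes "finite I" "0 \<le> p"
    and tuples: "\<forall>ij\<in>I. finite (Ms ij) \<and> (\<forall>t\<in>Ms ij. length t = k)"
    and over: "p * real (card V) < (\<Sum>ij\<in>I. real (card (induced_edges (Ms ij) V)))"
  obtains S where "S \<in> tuple_families I V k (least_nat_above (p * real (card V)))"
    and "\<forall>(ij, t)\<in>S. t \<in> Ms ij"
proof -
  define W where "W = Sigma I (\<lambda>ij. induced_edges (Ms ij) V)"
  have "real (card W) = (\<Sum>ij\<in>I. real (card (induced_edges (Ms ij) V)))"
    using assms(1) tuples by (simp add: W_def card_SigmaI induced_edges_def)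
  then have "least_nat_above (p * real (card V)) \<le> card W"
    using over assms(2) by (simp add: least_nat_above_le_iff)
  then obtain S where S: "S \<subseteq> W" "card S = least_nat_above (p * real (card V))"
    by (rule obtain_subset_with_card_n)
  show thesis
  proof (rule that)
    show "S \<in> tuple_families I V k (least_nat_above (p * real (card V)))"
      using S tuples by (auto simp: tuple_families_def W_def induced_edges_def)
    show "\<forall>(ij, t)\<in>S. t \<in> Ms ij"
      using S(1) by (auto simp: W_def induced_edges_def)
  qed
qed

lemma prob_sample_contains_tuple_family_le:
  assumes es: "\<forall>e\<in>set es. length e = k \<and> distinct e" and k: "k \<ge> 1" and "m \<le> n" "finite V"
    and S: "S \<in> tuple_families ({..<length es} \<times> {..<K}) V k r" and "2 * r \<le> n"
  shows "measure_pmf.prob (sample_matchings es K n m) {Ms. \<forall>(ij, t)\<in>S. t \<in> Ms ij}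
           \<le> (2 / real n) ^ ((k - 1) * r)"
proof -
  have S_sub: "S \<subseteq> ({..<length es} \<times> {..<K}) \<times> UNIV" and card_S: "card S = r"
    using S by (auto simp: tuple_families_def)
  have "finite S" using assms(4) S by (intro finite_tuple_family) auto
  from prob_sample_contains_le[OF es k assms(3) S_sub this, unfolded card_S, OF assms(6)]
  show ?thesis .
qed

definition small_sets_sparse ::
  "'v set \<Rightarrow> 'v list list \<Rightarrow> nat \<Rightarrow> nat \<Rightarrow> real \<Rightarrow> real \<Rightarrow> (nat \<times> nat \<Rightarrow> ('v \<times> nat) list set) set"
where
  "small_sets_sparse Vs es K n \<delta> p =
     {Ms. \<forall>V. V \<subseteq> Vs \<times> {1..n} \<and> real (card V) \<le> \<delta> * real n \<longrightarrow>
        (\<Sum>ij\<in>{..<length es} \<times> {..<K}. real (card (induced_edges (Ms ij) V))) \<le> p * real (card V)}"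

lemma not_small_sets_sparse_witness:
  fixes Vs :: "'v set"
  assumes es: "\<forall>e\<in>set es. length e = k \<and> distinct e" and k: "k \<ge> 1"
    and "finite Vs" "m \<le> n" "0 \<le> p"
    and Ms: "Ms \<in> set_pmf (sample_matchings es K n m)" "Ms \<notin> small_sets_sparse Vs es K n \<delta> p"
  obtains V S where "V \<subseteq> Vs \<times> {1..n}" "card V \<in> {1..nat \<lfloor>\<delta> * real n\<rfloor>}"
    and "S \<in> tuple_families ({..<length es} \<times> {..<K}) V k (least_nat_above (p * real (card V)))"
    and "\<forall>(ij, t)\<in>S. t \<in> Ms ij"
proof -
  define I where "I = {..<length es} \<times> {..<K}"
  obtain V where V: "V \<subseteq> Vs \<times> {1..n}" "real (card V) \<le> \<delta> * real n"
    "p * real (card V) < (\<Sum>ij\<in>I. real (card (induced_edges (Ms ij) V)))"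
    using Ms(2) by (auto simp: small_sets_sparse_def I_def not_le)
  have nonempty: "\<forall>e\<in>set es. e \<noteq> []" using es k by auto
  have Ms_matchings: "Ms \<in> PiE_dflt I {} (\<lambda>(i, j). matchings (es ! i) n m)"
    using set_pmf_sample_matchings[OF nonempty assms(4) Ms(1)] unfolding I_def .
  have tuples: "finite (Ms ij) \<and> (\<forall>t\<in>Ms ij. length t = k)" if ij_in: "ij \<in> I" for ij
  proof -
    obtain i j where ij: "ij = (i, j)" "i < length es" using ij_in by (auto simp: I_def)
    then have "Ms ij \<in> matchings (es ! i) n m"
      using Ms_matchings ij_in by (simp add: PiE_dflt_def)
    moreover have "length (es ! i) = k" using es ij(2) by simp
    ultimately show ?thesis using matchingsD(1,3) by (fastforce simp: blowup_tuples_def)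
  qed
  obtain S where S: "S \<in> tuple_families I V k (least_nat_above (p * real (card V)))"
    "\<forall>(ij, t)\<in>S. t \<in> Ms ij"
    using overfull_set_witness[OF _ assms(5) _ V(3)] tuples unfolding I_def by blast
  have "V \<noteq> {}"
  proof
    assume "V = {}"
    then have "S = {}" using S(1) k by (auto simp: tuple_families_def)
    then show False using S(1) by (simp add: tuple_families_def least_nat_above_def)
  qed
  moreover have "finite V" using assms(3) by (intro rev_finite_subset[OF _ V(1)]) simp
  ultimately have "1 \<le> card V" by (simp add: Suc_le_eq card_gt_0_iff)
  moreover have "card V \<le> nat \<lfloor>\<delta> * real n\<rfloor>" using V(2) by (simp add: le_nat_floor)
  ultimately show thesis using that V(1) S unfolding I_def by simp
qed

lemma prob_not_small_sets_sparse_le: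
  fixes Vs :: "'v set"
  assumes es: "\<forall>e\<in>set es. length e = k \<and> distinct e" and k: "k \<ge> 1"
    and "finite Vs" "m \<le> n" "0 \<le> p" "0 \<le> \<delta>"
    and small: "\<forall>s. real s \<le> \<delta> * real n \<longrightarrow> 2 * least_nat_above (p * real s) \<le> n"
  shows "measure_pmf.prob (sample_matchings es K n m) (- small_sets_sparse Vs es K n \<delta> p)
     \<le> (\<Sum>s=1..nat \<lfloor>\<delta> * real n\<rfloor>. real (card Vs * n choose s) *
          real ((length es * K * s ^ k) choose least_nat_above (p * real s)) *
          (2 / real n) ^ ((k - 1) * least_nat_above (p * real s)))"
proof -
  define I where "I = {..<length es} \<times> {..<K}"
  define N where "N = nat \<lfloor>\<delta> * real n\<rfloor>"
  define r where "r s = least_nat_above (p * real s)" for s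
  define witnesses where
    "witnesses s = (SIGMA V:{V. V \<subseteq> Vs \<times> {1..n} \<and> card V = s}. tuple_families I V k (r s))" for s
  define contains where
    "contains w = {Ms. \<forall>(ij, t)\<in>snd w. t \<in> Ms ij}"
    for w :: "('v \<times> nat) set \<times> ((nat \<times> nat) \<times> ('v \<times> nat) list) set"
  let ?P = "sample_matchings es K n m"
  have finite_grid: "finite (Vs \<times> {1..n})" using assms(3) by simp
  have cover: "- small_sets_sparse Vs es K n \<delta> p \<inter> set_pmf ?P \<subseteq> (\<Union>s\<in>{1..N}. \<Union>w\<in>witnesses s. contains w)"
  proof
    fix Ms assume "Ms \<in> - small_sets_sparse Vs es K n \<delta> p \<inter> set_pmf ?P"
    then have Ms: "Ms \<in> set_pmf ?P" "Ms \<notin> small_sets_sparse Vs es K n \<delta> p" by auto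
    obtain V S where "V \<subseteq> Vs \<times> {1..n}" "card V \<in> {1..nat \<lfloor>\<delta> * real n\<rfloor>}"
      "S \<in> tuple_families ({..<length es} \<times> {..<K}) V k (least_nat_above (p * real (card V)))"
      "\<forall>(ij, t)\<in>S. t \<in> Ms ij"
      using not_small_sets_sparse_witness[OF es k assms(3-5) Ms] by blast
    then have "(V, S) \<in> witnesses (card V)" "card V \<in> {1..N}" "Ms \<in> contains (V, S)"
      by (simp_all add: witnesses_def I_def N_def r_def contains_def)
    then show "Ms \<in> (\<Union>s\<in>{1..N}. \<Union>w\<in>witnesses s. contains w)" by blast
  qed
  have prob_contains: "measure_pmf.prob ?P (contains w) \<le> (2 / real n) ^ ((k - 1) * r s)"
    if w_in: "w \<in> witnesses s" and s_le: "s \<le> N" for w s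
  proof -
    obtain V S where w: "w = (V, S)" "V \<subseteq> Vs \<times> {1..n}" "S \<in> tuple_families I V k (r s)"
      using w_in unfolding witnesses_def by blast
    have "real s \<le> real N" using s_le by simp
    also have "\<dots> \<le> \<delta> * real n" using assms(6) by (simp add: N_def of_int_floor_le)
    finally have "2 * r s \<le> n" using small by (simp add: r_def)
    then show ?thesis
      using prob_sample_contains_tuple_family_le[OF es k assms(4) _ w(3)[unfolded I_def]]
        finite_subset[OF w(2) finite_grid]
      by (simp add: contains_def w(1))
  qed
  have "measure_pmf.prob ?P (- small_sets_sparse Vs es K n \<delta> p)
      \<le> measure_pmf.prob ?P (\<Union>s\<in>{1..N}. \<Union>w\<in>witnesses s. contains w)"
    using cover by (subst measure_Int_set_pmf[symmetric]) (rule measure_pmf.finite_measure_mono, auto)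
  also have "\<dots> \<le> (\<Sum>s=1..N. measure_pmf.prob ?P (\<Union>w\<in>witnesses s. contains w))"
    by (rule measure_pmf.finite_measure_subadditive_finite) auto
  also have "\<dots> \<le> (\<Sum>s=1..N. \<Sum>w\<in>witnesses s. measure_pmf.prob ?P (contains w))"
    using finite_grid by (intro sum_mono measure_pmf.finite_measure_subadditive_finite)
      (auto simp: witnesses_def I_def finite_Sigma_tuple_families)
  also have "\<dots> \<le> (\<Sum>s=1..N. real (card (witnesses s)) * (2 / real n) ^ ((k - 1) * r s))"
    using prob_contains by (intro sum_mono sum_bounded_above) auto
  finally show ?thesis
    using finite_grid assms(3)
    by (simp add: witnesses_def card_Sigma_tuple_families I_def card_cartesian_product N_def r_def mult_ac)
qed

section \<open>Estimating the union bound\<close>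

lemma power_div_fact_le_exp:
  fixes x :: real
  assumes "0 \<le> x"
  shows "x ^ r / fact r \<le> exp x"
proof -
  have "(\<lambda>n. x ^ n / fact n) sums exp x"
    using exp_converges[of x] by (simp add: divide_inverse mult.commute)
  then show ?thesis
    using sum_le_suminf[of "\<lambda>n. x ^ n / fact n" "{r}"] assms by (simp add: sums_iff)
qed

lemma binomial_le_exp_pow:
  assumes "1 \<le> r"
  shows "real (N choose r) \<le> (exp 1 * real N / real r) ^ r"
proof -
  have "real (N choose r) \<le> real N ^ r / fact r"
    using binomial_fact_pow[of N r]
    by (simp add: field_simps) (metis of_nat_fact of_nat_le_iff of_nat_mult of_nat_power)
  also have "\<dots> \<le> real N ^ r * (exp (real r) / real r ^ r)"
  proof -
    have "1 / fact r \<le> exp (real r) / real r ^ r"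
      using power_div_fact_le_exp[of "real r" r] assms by (simp add: field_simps)
    then show ?thesis
      by (metis divide_inverse mult_left_mono zero_le_power of_nat_0_le_iff inverse_eq_divide)
  qed
  also have "\<dots> = (exp 1 * real N / real r) ^ r"
    using exp_of_nat_mult[of r "1::real"] by (simp add: power_divide power_mult_distrib)
  finally show ?thesis .
qed

lemma choose_tuples_mult_le:
  fixes p A :: real
  assumes "0 < p" "1 \<le> s" "1 \<le> r" "p * real s \<le> real r" "1 \<le> k"
    and A: "exp 1 * real L * 2 ^ (k - 1) / p \<le> A"
  shows "real ((L * s ^ k) choose r) * (2 / real n) ^ ((k - 1) * r)
           \<le> (A * (real s / real n) ^ (k - 1)) ^ r"
proof -
  have s_pow: "real s ^ k = real s * real s ^ (k - 1)"
    using assms(5) by (metis Suc_diff_1 less_le_trans power_Suc zero_less_one)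
  have "exp 1 * real (L * s ^ k) / real r \<le> exp 1 * real (L * s ^ k) / (p * real s)"
    using assms(1-4) by (intro divide_left_mono) auto
  also have "\<dots> = exp 1 * real L * real s ^ (k - 1) / p"
    using assms(2) by (simp add: s_pow)
  finally have "real ((L * s ^ k) choose r) \<le> (exp 1 * real L * real s ^ (k - 1) / p) ^ r"
    using binomial_le_exp_pow[OF assms(3), of "L * s ^ k"] by (meson order_trans power_mono
      divide_nonneg_nonneg mult_nonneg_nonneg exp_ge_zero of_nat_0_le_iff)
  then have "real ((L * s ^ k) choose r) * (2 / real n) ^ ((k - 1) * r)
      \<le> (exp 1 * real L * real s ^ (k - 1) / p) ^ r * ((2 / real n) ^ (k - 1)) ^ r"
    by (simp add: power_mult mult_right_mono)
  also have "\<dots> = (exp 1 * real L * 2 ^ (k - 1) / p * (real s / real n) ^ (k - 1)) ^ r"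
  proof -
    have "real s ^ (k - 1) * (2 / real n) ^ (k - 1) = 2 ^ (k - 1) * (real s / real n) ^ (k - 1)"
      unfolding power_mult_distrib[symmetric] by (simp add: mult.commute)
    then have "exp 1 * real L * real s ^ (k - 1) / p * (2 / real n) ^ (k - 1)
        = exp 1 * real L * 2 ^ (k - 1) / p * (real s / real n) ^ (k - 1)"
      by (metis mult.assoc mult.commute times_divide_eq_left)
    then show ?thesis by (metis power_mult_distrib)
  qed
  also have "\<dots> \<le> (A * (real s / real n) ^ (k - 1)) ^ r"
    using assms(1) A by (intro power_mono mult_right_mono) auto
  finally show ?thesis .
qed

lemma power_excess_le:
  fixes A x p :: real
  assumes "1 \<le> A" "0 < x" "x \<le> 1" "p * real s \<le> real r" "real r \<le> p * real s + 1"
  shows "(A * x ^ j) ^ r \<le> A * (A powr p * x powr (real j * p)) ^ s"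
proof -
  have "A ^ r \<le> A powr (p * real s + 1)"
    using assms(1,5) by (simp add: powr_realpow[symmetric] powr_mono)
  also have "\<dots> = A * (A powr p) ^ s"
    using assms(1) by (simp add: powr_add powr_powr[symmetric] powr_realpow mult.commute)
  finally have A_pow: "A ^ r \<le> A * (A powr p) ^ s" .
  have "x ^ (j * r) = x powr (real j * real r)"
    using assms(2) by (simp add: powr_realpow[symmetric])
  also have "\<dots> \<le> x powr (real j * p * real s)"
    using assms(2-4) by (intro powr_mono') (auto simp: mult.assoc intro: mult_left_mono)
  also have "\<dots> = (x powr (real j * p)) ^ s"
    using assms(2) by (simp add: powr_powr[symmetric] powr_realpow)
  finally have x_pow: "x ^ (j * r) \<le> (x powr (real j * p)) ^ s" .
  have "(A * x ^ j) ^ r = A ^ r * x ^ (j * r)"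
    by (simp add: power_mult_distrib power_mult)
  also have "\<dots> \<le> A * (A powr p) ^ s * (x powr (real j * p)) ^ s"
    using A_pow x_pow assms(1,2) by (intro mult_mono) auto
  also have "\<dots> = A * (A powr p * x powr (real j * p)) ^ s"
    by (simp add: power_mult_distrib)
  finally show ?thesis .
qed

lemma first_moment_term_le:
  fixes p A D :: real
  assumes "1 \<le> k" "0 < p" "1 \<le> s" "s \<le> n" "1 \<le> A"
    and A: "exp 1 * real L * 2 ^ (k - 1) / p \<le> A" and D: "exp 1 * real C * A powr p \<le> D"
  shows "real (C * n choose s) * real ((L * s ^ k) choose least_nat_above (p * real s))
           * (2 / real n) ^ ((k - 1) * least_nat_above (p * real s))
         \<le> A * (D * (real s / real n) powr (real (k - 1) * p - 1)) ^ s"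
proof -
  define r where "r = least_nat_above (p * real s)"
  define x where "x = real s / real n"
  have x: "0 < x" "x \<le> 1" using assms(3,4) by (auto simp: x_def)
  have r: "p * real s \<le> real r" "real r \<le> p * real s + 1" "1 \<le> r"
    using less_least_nat_above[of "p * real s"] least_nat_above_le[of "p * real s"] assms(2)
    by (auto simp: r_def least_nat_above_def)
  have "real (C * n choose s) \<le> (exp 1 * real C / x) ^ s"
    using binomial_le_exp_pow[OF assms(3), of "C * n"] assms(3,4) by (simp add: x_def field_simps)
  moreover have "real ((L * s ^ k) choose r) * (2 / real n) ^ ((k - 1) * r)
      \<le> A * (A powr p * x powr (real (k - 1) * p)) ^ s"
    using choose_tuples_mult_le[OF assms(2,3) r(3,1) assms(1) A] power_excess_le[OF assms(5) x r(1,2)]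
    unfolding x_def by (rule order_trans)
  ultimately have "real (C * n choose s) * (real ((L * s ^ k) choose r) * (2 / real n) ^ ((k - 1) * r))
      \<le> (exp 1 * real C / x) ^ s * (A * (A powr p * x powr (real (k - 1) * p)) ^ s)"
    using x(1) by (intro mult_mono[OF _ _ zero_le_power]) auto
  also have "\<dots> = A * (exp 1 * real C * A powr p * (x powr (real (k - 1) * p) / x)) ^ s"
    by (simp add: power_mult_distrib power_divide field_simps)
  also have "\<dots> = A * (exp 1 * real C * A powr p * x powr (real (k - 1) * p - 1)) ^ s"
    using x(1) by (simp add: powr_diff)
  also have "\<dots> \<le> A * (D * x powr (real (k - 1) * p - 1)) ^ s"
    using D assms(5) x(1) by (intro mult_left_mono power_mono mult_right_mono) auto
  finally show ?thesis by (simp add: r_def x_def mult.assoc)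
qed

lemma power_le_geometric_plus_tail:
  fixes q r t :: real
  assumes "0 \<le> q" "q \<le> 1/2" "0 \<le> r" "1 \<le> s" and small: "real s \<le> t \<Longrightarrow> q \<le> r"
  shows "q ^ s \<le> r * (1/2) ^ (s - 1) + (1/2) powr t"
proof (cases "real s \<le> t")
  case True
  have "q ^ s = q * q ^ (s - 1)" using assms(4) by (cases s) auto
  also have "\<dots> \<le> r * (1/2) ^ (s - 1)"
    using small[OF True] assms(1,2) by (intro mult_mono power_mono) auto
  finally show ?thesis using powr_ge_zero[of "1/2" t] by linarith
next
  case False
  have "q ^ s \<le> (1/2) ^ s" using assms(1,2) by (intro power_mono)
  also have "\<dots> = (1/2) powr real s" by (simp add: powr_realpow)
  also have "\<dots> \<le> (1/2) powr t" using False by (intro powr_mono') auto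
  finally show ?thesis using assms(3) by (simp add: add_increasing)
qed

lemma sum_powr_ratio_le:
  fixes D \<gamma> \<delta> :: real
  assumes "0 \<le> D" "0 < \<gamma>" "\<delta> \<le> 1" "D * \<delta> powr \<gamma> \<le> 1/2" "0 < n" "real N \<le> \<delta> * real n"
  shows "(\<Sum>s=1..N. (D * (real s / real n) powr \<gamma>) ^ s)
         \<le> 2 * D * real n powr (-\<gamma>/2) + real n * (1/2) powr sqrt (real n)"
proof -
  define r where "r = D * real n powr (-\<gamma>/2)"
  define c where "c = (1/2::real) powr sqrt (real n)"
  have summand: "(D * (real s / real n) powr \<gamma>) ^ s \<le> r * (1/2) ^ (s - 1) + c" if s: "s \<in> {1..N}" for s
    unfolding c_def
  proof (rule power_le_geometric_plus_tail)
    have "real s / real n \<le> \<delta>" using s assms(5,6) by (auto simp: field_simps)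
    then have "D * (real s / real n) powr \<gamma> \<le> D * \<delta> powr \<gamma>"
      using assms(1,2) by (intro mult_left_mono powr_mono2) auto
    then show "D * (real s / real n) powr \<gamma> \<le> 1/2" using assms(4) by linarith
    assume "real s \<le> sqrt (real n)"
    then have "real s / real n \<le> sqrt (real n) / real n"
      using assms(5) by (intro divide_right_mono) auto
    also have "\<dots> = real n powr (1/2) / real n powr 1"
      using assms(5) by (simp add: powr_half_sqrt)
    also have "\<dots> = real n powr (1/2 - 1)"
      by (rule powr_diff[symmetric])
    finally have "real s / real n \<le> real n powr (-1/2)" by simp
    then show "D * (real s / real n) powr \<gamma> \<le> r"
      using assms(1,2) by (auto simp: r_def powr_powr intro!: mult_left_mono
          order_trans[OF powr_mono2[of \<gamma> "real s / real n" "real n powr (-1/2)"]])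
  qed (use s assms(1) in \<open>auto simp: r_def\<close>)
  have "(\<Sum>s=1..N. (D * (real s / real n) powr \<gamma>) ^ s) \<le> (\<Sum>s=1..N. r * (1/2) ^ (s - 1) + c)"
    using summand by (rule sum_mono)
  also have "\<dots> = r * (\<Sum>s=1..N. (1/2::real) ^ (s - 1)) + real N * c"
    by (simp add: sum.distrib sum_distrib_left)
  also have "\<dots> \<le> r * 2 + real n * c"
  proof (intro add_mono mult_left_mono)
    have "(\<Sum>s=1..N. (1/2::real) ^ (s - 1)) = 2 - 2 * (1/2) ^ N"
      by (induction N) (auto simp: sum.cl_ivl_Suc)
    then show "(\<Sum>s=1..N. (1/2::real) ^ (s - 1)) \<le> 2" by simp
    have "\<delta> * real n \<le> 1 * real n" using assms(3) by (rule mult_right_mono) simp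
    then have "real N \<le> real n" using assms(6) by simp
    then show "real N * c \<le> real n * c" by (simp add: c_def mult_right_mono)
  qed (simp_all add: r_def assms(1))
  finally show ?thesis by (simp add: r_def c_def mult_ac)
qed

lemma prob_not_small_sets_sparse_le_tail:
  fixes Vs :: "'v set" and p A D \<gamma> \<delta> :: real
  assumes es: "\<forall>e\<in>set es. length e = k \<and> distinct e" and k: "2 \<le> k"
    and "finite Vs" "m \<le> n" "4 \<le> n"
    and p: "0 < p" and \<gamma>: "\<gamma> = real (k - 1) * p - 1" "0 < \<gamma>"
    and A: "1 \<le> A" "exp 1 * real (length es * K) * 2 ^ (k - 1) / p \<le> A"
    and D: "1 \<le> D" "exp 1 * real (card Vs) * A powr p \<le> D"
    and \<delta>: "0 < \<delta>" "\<delta> \<le> 1" "\<delta> \<le> 1 / (4 * p)" "D * \<delta> powr \<gamma> \<le> 1/2"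
  shows "measure_pmf.prob (sample_matchings es K n m) (- small_sets_sparse Vs es K n \<delta> p)
           \<le> A * (2 * D * real n powr (-\<gamma>/2) + real n * (1/2) powr sqrt (real n))"
proof -
  define N where "N = nat \<lfloor>\<delta> * real n\<rfloor>"
  have N: "real N \<le> \<delta> * real n" using \<delta>(1) by (simp add: N_def of_int_floor_le)
  have "\<delta> * real n \<le> 1 * real n" using \<delta>(2) by (rule mult_right_mono) simp
  then have N_le: "N \<le> n" using N by simp
  have small: "\<forall>s. real s \<le> \<delta> * real n \<longrightarrow> 2 * least_nat_above (p * real s) \<le> n"
  proof (intro allI impI)
    fix s assume s: "real s \<le> \<delta> * real n"
    have "real (least_nat_above (p * real s)) \<le> p * real s + 1"
      using p by (simp add: least_nat_above_le)
    also have "\<dots> \<le> p * (1 / (4 * p) * real n) + 1"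
      using s \<delta>(3) p by (smt (verit) mult_left_mono mult_right_mono of_nat_0_le_iff)
    also have "\<dots> = real n / 4 + 1" using p by simp
    finally show "2 * least_nat_above (p * real s) \<le> n" using assms(5) by simp
  qed
  have "measure_pmf.prob (sample_matchings es K n m) (- small_sets_sparse Vs es K n \<delta> p)
      \<le> (\<Sum>s=1..N. real (card Vs * n choose s) *
          real ((length es * K * s ^ k) choose least_nat_above (p * real s)) *
          (2 / real n) ^ ((k - 1) * least_nat_above (p * real s)))"
    unfolding N_def using es k assms(3,4) p \<delta>(1) small by (intro prob_not_small_sets_sparse_le) auto
  also have "\<dots> \<le> (\<Sum>s=1..N. A * (D * (real s / real n) powr \<gamma>) ^ s)"
    using k p A D N_le unfolding \<gamma>(1) by (intro sum_mono first_moment_term_le) auto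
  also have "\<dots> = A * (\<Sum>s=1..N. (D * (real s / real n) powr \<gamma>) ^ s)"
    by (simp add: sum_distrib_left)
  also have "\<dots> \<le> A * (2 * D * real n powr (-\<gamma>/2) + real n * (1/2) powr sqrt (real n))"
    using A(1) D(1) \<gamma>(2) \<delta>(2,4) N assms(5) by (intro mult_left_mono sum_powr_ratio_le) auto
  finally show ?thesis .
qed

lemma small_sets_sparse_tail_bound:
  fixes Vs :: "'v set" and p :: real
  assumes es: "\<forall>e\<in>set es. length e = k \<and> distinct e" and k: "2 \<le> k"
    and "finite Vs" and p: "1 / (real k - 1) < p"
  obtains \<delta> \<gamma> C :: real where "0 < \<delta>" "\<delta> < 1" "0 < \<gamma>"
    "\<And>n m. 4 \<le> n \<Longrightarrow> m \<le> n \<Longrightarrow>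
       measure_pmf.prob (sample_matchings es K n m) (- small_sets_sparse Vs es K n \<delta> p)
         \<le> C * (real n powr (-\<gamma>/2) + real n * (1/2) powr sqrt (real n))"
proof -
  define \<gamma> where "\<gamma> = real (k - 1) * p - 1"
  define A where "A = max 1 (exp 1 * real (length es * K) * 2 ^ (k - 1) / p)"
  define D where "D = max 1 (exp 1 * real (card Vs) * A powr p)"
  \<comment> \<open>\<open>\<delta> \<le> 1/(4p)\<close> keeps every witness family below \<open>n/2\<close> edges; \<open>D \<delta>\<^sup>\<gamma> \<le> 1/2\<close> makes the terms decay.\<close>
  define \<delta> where "\<delta> = min (1/2) (min (1 / (4 * p)) ((1 / (2 * D)) powr (1 / \<gamma>)))"
  have k1: "real k - 1 = real (k - 1)" "0 < real (k - 1)" using k by auto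
  then have "0 < 1 / (real k - 1)" by simp
  then have p0: "0 < p" using p by linarith
  have "1 < p * real (k - 1)" using p unfolding k1(1) pos_divide_less_eq[OF k1(2)] .
  then have \<gamma>0: "0 < \<gamma>" unfolding \<gamma>_def by (metis diff_gt_0_iff_gt mult.commute)
  have A: "1 \<le> A" "exp 1 * real (length es * K) * 2 ^ (k - 1) / p \<le> A" by (simp_all add: A_def)
  have D: "1 \<le> D" "exp 1 * real (card Vs) * A powr p \<le> D" by (simp_all add: D_def)
  have \<delta>: "0 < \<delta>" "\<delta> \<le> 1" "\<delta> \<le> 1 / (4 * p)" using p0 D(1) by (simp_all add: \<delta>_def)
  have "\<delta> powr \<gamma> \<le> ((1 / (2 * D)) powr (1 / \<gamma>)) powr \<gamma>"
    using \<delta>(1) \<gamma>0 by (intro powr_mono2) (auto simp: \<delta>_def)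
  also have "\<dots> = 1 / (2 * D)" using \<gamma>0 D(1) by (simp add: powr_powr)
  finally have D\<delta>: "D * \<delta> powr \<gamma> \<le> 1/2" using D(1) by (simp add: field_simps)
  show thesis
  proof (rule that[of \<delta> \<gamma> "2 * A * D"])
    show "0 < \<delta>" "\<delta> < 1" "0 < \<gamma>" using \<delta> \<gamma>0 by (auto simp: \<delta>_def)
    fix n m :: nat assume n: "4 \<le> n" and m: "m \<le> n"
    let ?a = "real n powr (-\<gamma>/2)" and ?b = "real n * (1/2) powr sqrt (real n)"
    have "measure_pmf.prob (sample_matchings es K n m) (- small_sets_sparse Vs es K n \<delta> p)
        \<le> A * (2 * D * ?a + ?b)"
      by (rule prob_not_small_sets_sparse_le_tail[OF es k assms(3) m n p0 \<gamma>_def \<gamma>0 A D \<delta> D\<delta>])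
    also have "\<dots> \<le> A * (2 * D * ?a + 2 * D * ?b)"
      using A(1) D(1) mult_right_mono[of 1 "2 * D" ?b] by (intro mult_left_mono add_left_mono) auto
    also have "\<dots> = 2 * A * D * (?a + ?b)" by (simp add: algebra_simps)
    finally show "measure_pmf.prob (sample_matchings es K n m) (- small_sets_sparse Vs es K n \<delta> p)
        \<le> 2 * A * D * (?a + ?b)" .
  qed
qed

lemma small_sets_sparse_whp:
  fixes Vs :: "'v set" and p :: real
  assumes es: "\<forall>e\<in>set es. length e = k \<and> distinct e" and k: "2 \<le> k"
    and "finite Vs" and p: "1 / (real k - 1) < p"
  obtains \<delta> :: real where "0 < \<delta>" "\<delta> < 1"
    "\<And>\<epsilon>. 0 < \<epsilon> \<Longrightarrow> \<exists>n0. \<forall>n\<ge>n0. \<forall>m\<le>n.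
       1 - \<epsilon> \<le> measure_pmf.prob (sample_matchings es K n m) (small_sets_sparse Vs es K n \<delta> p)"
proof -
  obtain \<delta> \<gamma> C :: real where \<delta>: "0 < \<delta>" "\<delta> < 1" and "0 < \<gamma>"
    and tail: "\<And>n m. 4 \<le> n \<Longrightarrow> m \<le> n \<Longrightarrow>
       measure_pmf.prob (sample_matchings es K n m) (- small_sets_sparse Vs es K n \<delta> p)
         \<le> C * (real n powr (-\<gamma>/2) + real n * (1/2) powr sqrt (real n))"
    using small_sets_sparse_tail_bound[where K = K, OF es k assms(3) p] by blast
  have "(\<lambda>n. real n powr (-\<gamma>/2) + real n * (1/2) powr sqrt (real n)) \<longlonglongrightarrow> 0"
    using \<open>0 < \<gamma>\<close> by real_asymp
  then have tail_limit: "(\<lambda>n. C * (real n powr (-\<gamma>/2) + real n * (1/2) powr sqrt (real n))) \<longlonglongrightarrow> 0"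
    by (rule tendsto_mult_right_zero)
  show thesis
  proof (rule that[OF \<delta>])
    fix \<epsilon> :: real assume \<epsilon>: "0 < \<epsilon>"
    obtain n0 where n0: "\<forall>n\<ge>n0. C * (real n powr (-\<gamma>/2) + real n * (1/2) powr sqrt (real n)) < \<epsilon>"
      using order_tendstoD(2)[OF tail_limit \<epsilon>] by (auto simp: eventually_sequentially)
    have "1 - \<epsilon> \<le> measure_pmf.prob (sample_matchings es K n m) (small_sets_sparse Vs es K n \<delta> p)"
      if n: "max n0 4 \<le> n" and m: "m \<le> n" for n m
    proof -
      have "4 \<le> n" "n0 \<le> n" using n by auto
      then have "measure_pmf.prob (sample_matchings es K n m) (- small_sets_sparse Vs es K n \<delta> p) < \<epsilon>"
        using order_le_less_trans[OF tail[OF _ m] n0[rule_format]] by blast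
      moreover have "measure_pmf.prob (sample_matchings es K n m) (small_sets_sparse Vs es K n \<delta> p)
          = 1 - measure_pmf.prob (sample_matchings es K n m) (- small_sets_sparse Vs es K n \<delta> p)"
        using measure_pmf.prob_compl[of "- small_sets_sparse Vs es K n \<delta> p" "sample_matchings es K n m"]
        by simp
      ultimately show ?thesis by linarith
    qed
    then show "\<exists>n0. \<forall>n\<ge>n0. \<forall>m\<le>n.
        1 - \<epsilon> \<le> measure_pmf.prob (sample_matchings es K n m) (small_sets_sparse Vs es K n \<delta> p)"
      by blast
  qed
qed

theorem lemma7p4:
  fixes Vs :: "'v set" and es :: "'v list list" and k K :: nat and \<alpha> p :: real
  assumes "k \<ge> 2"
    and "finite Vs"
    and "\<forall>e\<in>set es. length e = k \<and> distinct e \<and> set e \<subseteq> Vs"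
    and "K > 0"
    and "0 < \<alpha>" and "\<alpha> \<le> 1"
    and "p > 1 / (real k - 1)"
  shows "\<exists>\<delta>::real. 0 < \<delta> \<and> \<delta> < 1 \<and>
    (\<forall>\<epsilon>>0. \<exists>n0. \<forall>n\<ge>n0. \<alpha> * real n \<in> \<int> \<longrightarrow>
       measure_pmf.prob (sample_matchings es K n (nat \<lfloor>\<alpha> * real n\<rfloor>))
         {Ms. \<forall>V. V \<subseteq> Vs \<times> {1..n} \<and> real (card V) \<le> \<delta> * real n \<longrightarrow>
                (\<Sum>ij\<in>{..<length es} \<times> {..<K}. real (card (induced_edges (Ms ij) V)))
                  \<le> p * real (card V)}
       \<ge> 1 - \<epsilon>)"
proof -
  have es: "\<forall>e\<in>set es. length e = k \<and> distinct e" using assms(3) by auto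
  obtain \<delta> :: real where \<delta>: "0 < \<delta>" "\<delta> < 1"
    and whp: "\<And>\<epsilon>. 0 < \<epsilon> \<Longrightarrow> \<exists>n0. \<forall>n\<ge>n0. \<forall>m\<le>n.
       1 - \<epsilon> \<le> measure_pmf.prob (sample_matchings es K n m) (small_sets_sparse Vs es K n \<delta> p)"
    using small_sets_sparse_whp[where K = K, OF es assms(1,2,7)] by blast
  have "nat \<lfloor>\<alpha> * real n\<rfloor> \<le> n" for n
  proof -
    have "\<alpha> * real n \<le> real n" using assms(5,6) by (simp add: mult_left_le_one_le)
    then show ?thesis by (simp add: nat_le_iff floor_le_iff)
  qed
  then have "\<exists>n0. \<forall>n\<ge>n0. 1 - \<epsilon> \<le>
      measure_pmf.prob (sample_matchings es K n (nat \<lfloor>\<alpha> * real n\<rfloor>)) (small_sets_sparse Vs es K n \<delta> p)"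
    if "0 < \<epsilon>" for \<epsilon>
    using whp[OF that] by blast
  then show ?thesis using \<delta> unfolding small_sets_sparse_def[symmetric] by blast
qed

end
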